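(* Let $U,V\in\mathbb{R}^{3\times3}$ be symmetric positive definite with $U\neq V$, $UV=VU$, and $V=RUR^T$ for some $R\in SO(3)$. Suppose the eigenvalues of $U$ satisfy $\frac1{\sqrt2}<\lambda_1<\lambda_2=1<\lambda_3$, that $U$ and $V$ have a common eigenvector for the eigenvalue $1$, and that $$\lambda_3=\frac{\lambda_1}{\sqrt{2\lambda_1^2-1}}.$$ Then there exist rotations $R_u^{+},R_v^{+},R_u^{-},R_v^{-}\in SO(3)$, nonzero vectors $b^{+},b^{-}\in\mathbb{R}^3$ with $b^{+}\nparallel b^{-}$, and unit vectors $\hat m_u^{\pm},\hat m_v^{\pm}$ such that, for each sign, $$R_u^{\pm}U-I=b^{\pm}\otimes\hat m_u^{\pm},\qquad R_v^{\pm}V-I=b^{\pm}\otimes\hat m_v^{\pm},$$ and hence $R_u^{\pm}U-R_v^{\pm}V=b^{\pm}\otimes(\hat m_u^{\pm}-\hat m_v^{\pm})$. That is, $U$, $V$ and the identity (austenite) form two distinct planar triple clusters in which the three pairwise differences are rank-one with a common (parallel) shear vector.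
   Context: Here $I$ is the identity matrix (representing austenite) and $SO(3)$ the rotation group. *)

theory Defs
  imports "HOL-Analysis.Analysis"
begin

definition SO3 :: "(real^3^3) set" where
  "SO3 = {R. orthogonal_matrix R \<and> det R = 1}"

definition sym_posdef :: "real^3^3 \<Rightarrow> bool" where
  "sym_posdef A \<longleftrightarrow> transpose A = A \<and> (\<forall>x. x \<noteq> 0 \<longrightarrow> x \<bullet> (A *v x) > 0)"

definition eigenvalues3 :: "real^3^3 \<Rightarrow> real set" where
  "eigenvalues3 A = {l. \<exists>v. v \<noteq> 0 \<and> A *v v = l *\<^sub>R v}"

definition tensor :: "real^3 \<Rightarrow> real^3 \<Rightarrow> real^3^3" where
  "tensor a b = (\<chi> i j. a $ i * b $ j)"

definition parallel3 :: "real^3 \<Rightarrow> real^3 \<Rightarrow> bool" where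
  "parallel3 a b \<longleftrightarrow> (\<exists>c. a = c *\<^sub>R b) \<or> (\<exists>c. b = c *\<^sub>R a)"

end

theory Submission
  imports Defs
begin

text \<open>Diagonalise \<open>U\<close> in an orthonormal eigenbasis. Since \<open>U\<close> has simple spectrum and
  commutes with \<open>V\<close>, the matrix \<open>V\<close> is diagonal in the same basis; being a rotated copy of \<open>U\<close>
  (same trace and determinant) that fixes the common eigenvector, and differing from \<open>U\<close>, it is
  \<open>U\<close> with \<open>\<lambda>\<^sub>1\<close> and \<open>\<lambda>\<^sub>3\<close> swapped. The problem then lives in the plane orthogonal to the
  common eigenvector: a rotation about that axis makes \<open>diag(\<lambda>\<^sub>1, \<lambda>\<^sub>3) - I\<close> rank-one precisely
  when \<open>\<lambda>\<^sub>1\<^sup>2 + \<lambda>\<^sub>3\<^sup>2 = 2 \<lambda>\<^sub>1\<^sup>2 \<lambda>\<^sub>3\<^sup>2\<close>, which is the hypothesis on \<open>\<lambda>\<^sub>3\<close>. The two senses of rotation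
  give the shear vectors \<open>b\<^sup>\<plusminus> \<sim> (1, 0, \<plusminus>1)\<close>, and swapping \<open>\<lambda>\<^sub>1, \<lambda>\<^sub>3\<close> yields the same
  shear vectors for \<open>V\<close>.\<close>

definition diag3 :: "real \<Rightarrow> real \<Rightarrow> real \<Rightarrow> real^3^3" where
  "diag3 a b c = vector [vector [a,0,0], vector [0,b,0], vector [0,0,c]]"

lemma matrix_matrix_mult_3:
  "((A::real^3^3) ** B)$i$j = A$i$1*B$1$j + A$i$2*B$2$j + A$i$3*B$3$j"
  by (simp add: matrix_matrix_mult_def sum_3)

lemma matrix_vector_mult_3:
  "((A::real^3^3) *v x)$i = A$i$1*x$1 + A$i$2*x$2 + A$i$3*x$3"
  by (simp add: matrix_vector_mult_def sum_3)

lemma inner_vec_3: "(x::real^3) \<bullet> y = x$1*y$1 + x$2*y$2 + x$3*y$3"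
  by (simp add: inner_vec_def sum_3)

lemma matrix_diff_ldistrib: "(A::'a::ring_1^'n^'m) ** (B - C) = A ** B - A ** C"
  by (simp add: vec_eq_iff matrix_matrix_mult_def sum_subtractf right_diff_distrib)

lemma matrix_diff_rdistrib: "((B::'a::ring_1^'n^'m) - C) ** A = B ** A - C ** A"
  by (simp add: vec_eq_iff matrix_matrix_mult_def sum_subtractf left_diff_distrib)

lemma orthogonal_conj_mult:
  fixes P :: "real^'n^'n"
  assumes "orthogonal_matrix P"
  shows "(P ** A ** transpose P) ** (P ** B ** transpose P) = P ** (A ** B) ** transpose P"
proof -
  have "transpose P ** (P ** X) = X" for X :: "real^'n^'n"
    using assms by (simp add: matrix_mul_assoc orthogonal_matrix)
  then show ?thesis by (simp add: matrix_mul_assoc[symmetric])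
qed

lemma orthogonal_conj_cancel:
  fixes P :: "real^'n^'n"
  assumes "orthogonal_matrix P"
  shows "transpose P ** (P ** A ** transpose P) ** P = A"
proof -
  have "transpose P ** P = mat 1" using assms by (simp add: orthogonal_matrix)
  moreover have "transpose P ** (P ** X) = X" for X :: "real^'n^'n"
    using calculation by (simp add: matrix_mul_assoc)
  ultimately show ?thesis by (simp add: matrix_mul_assoc[symmetric])
qed

lemma orthogonal_conj_diff_mat1:
  fixes P :: "real^'n^'n"
  assumes "orthogonal_matrix P"
  shows "P ** A ** transpose P - mat 1 = P ** (A - mat 1) ** transpose P"
  using assms by (simp add: matrix_diff_ldistrib matrix_diff_rdistrib orthogonal_matrix_def)

lemma trace_orthogonal_conj:
  fixes P :: "real^'n^'n"
  assumes "orthogonal_matrix P"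
  shows "trace (P ** A ** transpose P) = trace A"
  using assms by (simp add: trace_mul_sym[of "P ** A"] matrix_mul_assoc orthogonal_matrix)

lemma det_orthogonal_conj:
  fixes P :: "real^'n^'n"
  assumes "orthogonal_matrix P"
  shows "det (P ** A ** transpose P) = det A"
proof -
  have "det P * det P = 1" using det_orthogonal_matrix[OF assms] by auto
  then show ?thesis by (simp add: det_mul det_transpose)
qed

lemma norm_orthogonal_matrix_mult:
  fixes P :: "real^'n^'n"
  assumes "orthogonal_matrix P"
  shows "norm (P *v x) = norm x"
  using assms orthogonal_transformation_matrix[of "(*v) P"]
  by (simp add: orthogonal_transformation_norm)

lemma orthogonal_conj_SO3:
  assumes "orthogonal_matrix P" "Q \<in> SO3"
  shows "P ** Q ** transpose P \<in> SO3"
proof -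
  have "det P * det P = 1" using det_orthogonal_matrix[OF assms(1)] by auto
  then show ?thesis using assms by (auto simp: SO3_def det_mul orthogonal_matrix_mul)
qed

lemma symmetric_eigenvectors_orthogonal:
  fixes U :: "real^'n^'n"
  assumes "transpose U = U" "U *v x = a *\<^sub>R x" "U *v y = b *\<^sub>R y" "a \<noteq> b"
  shows "x \<bullet> y = 0"
proof -
  have "(U *v x) \<bullet> y = x \<bullet> (U *v y)"
    by (metis assms(1) dot_lmul_matrix transpose_transpose vector_transpose_matrix)
  then have "a * (x \<bullet> y) = b * (x \<bullet> y)" using assms by simp
  then show ?thesis using assms(4) by simp
qed

lemma unit_eigenvector_exists:
  assumes "l \<in> eigenvalues3 U"
  obtains u where "norm u = 1" "U *v u = l *\<^sub>R u"
proof -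
  obtain v where "v \<noteq> 0" "U *v v = l *\<^sub>R v" using assms by (auto simp: eigenvalues3_def)
  then show ?thesis
    by (intro that[of "(1 / norm v) *\<^sub>R v"]) (simp_all add: matrix_vector_mult_scaleR)
qed

lemma symmetric_diagonalization3:
  assumes U: "transpose U = U" and ev: "eigenvalues3 U = {a, b, c}"
    and distinct: "a \<noteq> b" "a \<noteq> c" "b \<noteq> c"
  obtains P where "orthogonal_matrix P" "U = P ** diag3 a b c ** transpose P"
proof -
  obtain u1 u2 u3 where
    u: "norm u1 = 1" "norm u2 = 1" "norm u3 = 1" and
    e: "U *v u1 = a *\<^sub>R u1" "U *v u2 = b *\<^sub>R u2" "U *v u3 = c *\<^sub>R u3"
    using unit_eigenvector_exists ev by (metis insertI1 insertI2)
  have orth: "u1 \<bullet> u2 = 0" "u1 \<bullet> u3 = 0" "u2 \<bullet> u3 = 0"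
    using symmetric_eigenvectors_orthogonal[OF U] e distinct by blast+
  have unit: "u1 \<bullet> u1 = 1" "u2 \<bullet> u2 = 1" "u3 \<bullet> u3 = 1"
    using u by (simp_all add: norm_eq_1)
  define Q :: "real^3^3" where "Q = vector [u1, u2, u3]"
  have "Q ** transpose Q = mat 1"
    using orth unit
    by (auto simp: vec_eq_iff forall_3 matrix_matrix_mult_3 mat_def transpose_def Q_def inner_vec_3
        mult.commute)
  then have oP: "orthogonal_matrix (transpose Q)"
    by (simp add: orthogonal_matrix)
  have "\<forall>j. U *v (Q $ j) = diag3 a b c $ j $ j *\<^sub>R Q $ j"
    unfolding forall_3 using e by (simp add: Q_def diag3_def)
  then have eig: "U *v (Q $ j) = diag3 a b c $ j $ j *\<^sub>R Q $ j" for j by blast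
  have "U ** transpose Q = transpose Q ** diag3 a b c"
  proof -
    have "(U ** transpose Q) $ i $ j = (U *v (Q $ j)) $ i" for i j
      by (simp add: matrix_matrix_mult_def matrix_vector_mult_def transpose_def)
    moreover have "\<forall>j. (transpose Q ** diag3 a b c) $ i $ j = Q $ j $ i * diag3 a b c $ j $ j" for i
      unfolding forall_3 by (simp add: matrix_matrix_mult_3 diag3_def transpose_def)
    ultimately show ?thesis by (simp add: vec_eq_iff eig)
  qed
  then have "U = transpose Q ** diag3 a b c ** transpose (transpose Q)"
    using oP by (metis matrix_mul_assoc matrix_mul_rid orthogonal_matrix_def)
  with oP show ?thesis by (rule that)
qed

lemma commute_diag3_imp_diag3:
  assumes "a \<noteq> b" "a \<noteq> c" "b \<noteq> c" "diag3 a b c ** X = X ** diag3 a b c"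
  shows "X = diag3 (X$1$1) (X$2$2) (X$3$3)"
proof -
  have "\<forall>i j. (diag3 a b c ** X) $ i $ j = (X ** diag3 a b c) $ i $ j" using assms(4) by simp
  then show ?thesis
    using assms(1-3) by (auto simp: vec_eq_iff forall_3 matrix_matrix_mult_3 diag3_def)
qed

lemma diag3_fixed_vector_middle:
  assumes "a \<noteq> 1" "c \<noteq> 1" "e \<noteq> 0"
    and "diag3 a 1 c *v e = e" "diag3 x y z *v e = e"
  shows "y = 1"
proof -
  have "a * e$1 = e$1" "c * e$3 = e$3" "y * e$2 = e$2"
    using assms(4,5) by (simp_all add: vec_eq_iff forall_3 matrix_vector_mult_3 diag3_def)
  moreover have "e$1 \<noteq> 0 \<or> e$2 \<noteq> 0 \<or> e$3 \<noteq> 0" using assms(3) by (simp add: vec_eq_iff forall_3)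
  ultimately show ?thesis using assms(1,2) by auto
qed

lemma diag3_eq_or_swap:
  assumes "b \<noteq> 0"
    and "trace (diag3 x b z) = trace (diag3 a b c)" "det (diag3 x b z) = det (diag3 a b c)"
  shows "x = a \<and> z = c \<or> x = c \<and> z = a"
proof -
  have "x + z = a + c" "x * z = a * c"
    using assms by (simp_all add: trace_def sum_3 det_3 diag3_def)
  then have "(x - a) * (x - c) = 0" by algebra
  then show ?thesis using \<open>x + z = a + c\<close> by auto
qed

lemma commuting_rotated_simultaneous_diag3:
  assumes U: "transpose U = U" and ev: "eigenvalues3 U = {a, 1, c}"
    and distinct: "a \<noteq> 1" "c \<noteq> 1" "a \<noteq> c"
    and comm: "U ** V = V ** U" and R: "orthogonal_matrix R" "V = R ** U ** transpose R"
    and "U \<noteq> V" and e: "e \<noteq> 0" "U *v e = e" "V *v e = e"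
  obtains P where "orthogonal_matrix P"
    "U = P ** diag3 a 1 c ** transpose P" "V = P ** diag3 c 1 a ** transpose P"
proof -
  obtain P where P: "orthogonal_matrix P" and UP: "U = P ** diag3 a 1 c ** transpose P"
    using symmetric_diagonalization3[OF U ev] distinct by metis
  have tP: "orthogonal_matrix (transpose P)" using P by simp
  define V0 where "V0 = transpose P ** V ** P"
  have VP: "V = P ** V0 ** transpose P"
    using orthogonal_conj_cancel[OF tP, of V] by (simp add: V0_def)
  have D: "diag3 a 1 c = transpose P ** U ** P"
    using orthogonal_conj_cancel[OF P] UP by simp
  have "diag3 a 1 c ** V0 = V0 ** diag3 a 1 c"
    using orthogonal_conj_mult[OF tP] comm by (simp add: D V0_def)
  then have V0: "V0 = diag3 (V0$1$1) (V0$2$2) (V0$3$3)"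
    using commute_diag3_imp_diag3 distinct by blast
  define e' where "e' = transpose P *v e"
  have "e = P *v e'"
    using P by (simp add: e'_def matrix_vector_mul_assoc orthogonal_matrix_def del: transpose_matrix_vector)
  then have "e' \<noteq> 0" "diag3 a 1 c *v e' = e'" "V0 *v e' = e'"
    using e by (auto simp: D V0_def e'_def matrix_vector_mul_assoc[symmetric] simp del: transpose_matrix_vector)
  then have "V0$2$2 = 1"
    using diag3_fixed_vector_middle distinct V0 by metis
  moreover have "trace V0 = trace (diag3 a 1 c)" "det V0 = det (diag3 a 1 c)"
  proof -
    have V0': "V0 = transpose P ** V ** transpose (transpose P)" by (simp add: V0_def)
    show "trace V0 = trace (diag3 a 1 c)"
      unfolding V0' trace_orthogonal_conj[OF tP] R(2) trace_orthogonal_conj[OF R(1)]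
      unfolding UP trace_orthogonal_conj[OF P] ..
    show "det V0 = det (diag3 a 1 c)"
      unfolding V0' det_orthogonal_conj[OF tP] R(2) det_orthogonal_conj[OF R(1)]
      unfolding UP det_orthogonal_conj[OF P] ..
  qed
  ultimately have "V0$1$1 = a \<and> V0$3$3 = c \<or> V0$1$1 = c \<and> V0$3$3 = a"
    using diag3_eq_or_swap[of 1] V0 by (metis one_neq_zero)
  moreover have "V0 \<noteq> diag3 a 1 c" using \<open>U \<noteq> V\<close> UP VP by auto
  ultimately have "V0 = diag3 c 1 a" using V0 \<open>V0$2$2 = 1\<close> by auto
  with P UP VP show ?thesis using that by simp
qed

lemma tensor_conj: "(P::real^3^3) ** tensor b m ** transpose P = tensor (P *v b) (P *v m)"
  by (auto simp: vec_eq_iff forall_3 matrix_matrix_mult_3 matrix_vector_mult_3 tensor_def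
      transpose_def algebra_simps)

lemma tensor_diff: "tensor b m1 - tensor b m2 = tensor b (m1 - m2)"
  by (simp add: vec_eq_iff tensor_def algebra_simps)

lemma parallel3_orthogonal_iff:
  assumes "orthogonal_matrix (P::real^3^3)"
  shows "parallel3 (P *v a) (P *v b) \<longleftrightarrow> parallel3 a b"
proof -
  have "inj ((*v) P)"
    using assms orthogonal_transformation_matrix[of "(*v) P"] orthogonal_transformation_inj by simp
  then have "P *v x = P *v y \<longleftrightarrow> x = y" for x y by (auto dest: injD)
  then show ?thesis
    unfolding parallel3_def by (simp add: matrix_vector_mult_scaleR[symmetric])
qed

lemma orthogonal_shear_pair_independent:
  assumes P: "orthogonal_matrix P" and "d \<noteq> 0"
  shows "P *v vector [d, 0, d] \<noteq> 0" "P *v vector [d, 0, - d] \<noteq> 0"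
    "\<not> parallel3 (P *v vector [d, 0, d]) (P *v vector [d, 0, - d])"
proof -
  have "vector [d, 0, d] \<noteq> (0::real^3)" "vector [d, 0, - d] \<noteq> (0::real^3)"
    using \<open>d \<noteq> 0\<close> by (simp_all add: vec_eq_iff forall_3)
  then show "P *v vector [d, 0, d] \<noteq> 0" "P *v vector [d, 0, - d] \<noteq> 0"
    by (metis norm_eq_zero norm_orthogonal_matrix_mult[OF P])+
  have "\<not> parallel3 (vector [d, 0, d]) (vector [d, 0, - d])"
    using \<open>d \<noteq> 0\<close> unfolding parallel3_def by (auto simp: vec_eq_iff forall_3)
  then show "\<not> parallel3 (P *v vector [d, 0, d]) (P *v vector [d, 0, - d])"
    using parallel3_orthogonal_iff[OF P] by simp
qed

definition rank_one_cluster :: "real^3^3 \<Rightarrow> real^3^3 \<Rightarrow> real^3 \<Rightarrow> bool" where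
  "rank_one_cluster U V b \<longleftrightarrow>
     (\<exists>Ru Rv mu mv. Ru \<in> SO3 \<and> Rv \<in> SO3 \<and> norm mu = 1 \<and> norm mv = 1 \<and>
        Ru ** U - mat 1 = tensor b mu \<and> Rv ** V - mat 1 = tensor b mv)"

lemma rank_one_cluster_difference:
  assumes "rank_one_cluster U V b"
  shows "\<exists>Ru Rv mu mv. Ru \<in> SO3 \<and> Rv \<in> SO3 \<and> norm mu = 1 \<and> norm mv = 1 \<and>
           Ru ** U - mat 1 = tensor b mu \<and> Rv ** V - mat 1 = tensor b mv \<and>
           Ru ** U - Rv ** V = tensor b (mu - mv)"
proof -
  obtain Ru Rv mu mv where "Ru \<in> SO3" "Rv \<in> SO3" "norm mu = 1" "norm mv = 1"
    and u: "Ru ** U - mat 1 = tensor b mu" and v: "Rv ** V - mat 1 = tensor b mv"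
    using assms unfolding rank_one_cluster_def by blast
  moreover have "Ru ** U - Rv ** V = tensor b (mu - mv)"
    by (metis u v tensor_diff diff_diff_eq2 diff_add_cancel)
  ultimately show ?thesis by blast
qed

lemma rank_one_cluster_orthogonal_conj:
  assumes P: "orthogonal_matrix P" and "rank_one_cluster U V b"
  shows "rank_one_cluster (P ** U ** transpose P) (P ** V ** transpose P) (P *v b)"
proof -
  have conj: "(P ** R ** transpose P) ** (P ** A ** transpose P) - mat 1 = tensor (P *v b) (P *v m)"
    if "R ** A - mat 1 = tensor b m" for R A m
  proof -
    have "(P ** R ** transpose P) ** (P ** A ** transpose P) - mat 1
          = P ** (R ** A - mat 1) ** transpose P"
      by (simp only: orthogonal_conj_mult[OF P] orthogonal_conj_diff_mat1[OF P])
    then show ?thesis by (simp only: that tensor_conj)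
  qed
  obtain Ru Rv mu mv where "Ru \<in> SO3" "Rv \<in> SO3" "norm mu = 1" "norm mv = 1"
    "Ru ** U - mat 1 = tensor b mu" "Rv ** V - mat 1 = tensor b mv"
    using assms(2) unfolding rank_one_cluster_def by blast
  with P show ?thesis
    unfolding rank_one_cluster_def
    by (intro exI[of _ "P ** Ru ** transpose P"] exI[of _ "P ** Rv ** transpose P"]
        exI[of _ "P *v mu"] exI[of _ "P *v mv"])
      (simp add: orthogonal_conj_SO3 norm_orthogonal_matrix_mult conj)
qed

definition rot_y :: "real \<Rightarrow> real \<Rightarrow> real^3^3" where
  "rot_y c s = vector [vector [c,0,s], vector [0,1,0], vector [-s,0,c]]"

lemma rot_y_SO3:
  assumes "c^2 + s^2 = 1"
  shows "rot_y c s \<in> SO3"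
  using assms unfolding SO3_def orthogonal_matrix
  by (auto simp: vec_eq_iff forall_3 matrix_matrix_mult_3 det_3 mat_def transpose_def
      rot_y_def power2_eq_square algebra_simps)

text \<open>The rotations about the common axis \<open>e\<^sub>2\<close> have \<open>cos \<theta> = (p + q) / (2pq)\<close> and
  \<open>sin \<theta> = \<plusminus>(q - p) / (2pq)\<close>; these form a point of the unit circle exactly because
  \<open>p\<^sup>2 + q\<^sup>2 = 2 p\<^sup>2 q\<^sup>2\<close>.\<close>
lemma rank_one_cluster_diag3:
  assumes p: "p > 0" and q: "q > 0" and pq: "p^2 + q^2 = 2*p^2*q^2" and k: "k^2 = 1"
  shows "rank_one_cluster (diag3 p 1 q) (diag3 q 1 p)
           (vector [(q-p)/sqrt 2, 0, k*(q-p)/sqrt 2])"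
proof -
  define s t where "s = (q+p)/(2*p*q)" and "t = (q-p)/(2*p*q)"
  have "(q+p)^2 + (q-p)^2 = (2*p*q)^2" using pq by (simp add: power2_eq_square algebra_simps)
  then have st: "s^2 + t^2 = 1"
    using p q by (simp add: s_def t_def power_divide add_divide_distrib[symmetric])
  have kk: "k*(k*x) = x" for x using k by (simp add: mult.assoc[symmetric] power2_eq_square[symmetric])
  have s2: "sqrt 2 * sqrt 2 = (2::real)" by simp
  define b mu mv :: "real^3" where "b = vector [(q-p)/sqrt 2, 0, k*(q-p)/sqrt 2]"
    and "mu = vector [-1/(sqrt 2*q), 0, k/(sqrt 2*p)]"
    and "mv = vector [1/(sqrt 2*p), 0, -k/(sqrt 2*q)]"
  have "rot_y s (k*t) \<in> SO3" "rot_y s (-k*t) \<in> SO3"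
    using rot_y_SO3[of s] st k by (simp_all add: power_mult_distrib)
  moreover have "norm mu = 1" "norm mv = 1"
    using p q k pq
    by (simp_all add: norm_eq_sqrt_inner inner_vec_3 mu_def mv_def field_simps power2_eq_square s2)
  moreover have "rot_y s (k*t) ** diag3 p 1 q - mat 1 = tensor b mu"
    using p q by (auto simp: vec_eq_iff forall_3 matrix_matrix_mult_3 rot_y_def diag3_def mat_def
        tensor_def b_def mu_def s_def t_def field_simps s2 kk)
  moreover have "rot_y s (-k*t) ** diag3 q 1 p - mat 1 = tensor b mv"
    using p q by (auto simp: vec_eq_iff forall_3 matrix_matrix_mult_3 rot_y_def diag3_def mat_def
        tensor_def b_def mv_def s_def t_def field_simps s2 kk)
  ultimately show ?thesis unfolding rank_one_cluster_def b_def by blast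
qed

lemma twin_eigenvalue_relation:
  fixes l1 l3 :: real
  assumes "1 / sqrt 2 < l1" "l3 = l1 / sqrt (2 * l1^2 - 1)"
  shows "l1^2 + l3^2 = 2 * l1^2 * l3^2"
proof -
  have "1 < sqrt 2 * l1" using assms(1) by (simp add: field_simps)
  then have "1 < (sqrt 2 * l1)^2" by (simp add: one_less_power)
  then have pos: "2 * l1^2 - 1 > 0" by (simp add: power_mult_distrib)
  then have "l3^2 = l1^2 / (2 * l1^2 - 1)" using assms(2) by (simp add: power_divide)
  with pos show ?thesis by (simp add: field_simps)
qed

theorem mainTheorem3:
  fixes U V :: "real^3^3" and l1 l3 :: real
  assumes "sym_posdef U" and "sym_posdef V" and "U \<noteq> V"
    and "U ** V = V ** U"
    and "\<exists>R \<in> SO3. V = R ** U ** transpose R"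
    and "eigenvalues3 U = {l1, 1, l3}"
    and "1 / sqrt 2 < l1" and "l1 < 1" and "1 < l3"
    and "\<exists>e. e \<noteq> 0 \<and> U *v e = e \<and> V *v e = e"
    and "l3 = l1 / sqrt (2 * l1^2 - 1)"
  shows "\<exists>Rup Rvp Rum Rvm bp bm mup mvp mum mvm.
           Rup \<in> SO3 \<and> Rvp \<in> SO3 \<and> Rum \<in> SO3 \<and> Rvm \<in> SO3 \<and>
           bp \<noteq> 0 \<and> bm \<noteq> 0 \<and> \<not> parallel3 bp bm \<and>
           norm mup = 1 \<and> norm mvp = 1 \<and> norm mum = 1 \<and> norm mvm = 1 \<and>
           Rup ** U - mat 1 = tensor bp mup \<and> Rvp ** V - mat 1 = tensor bp mvp \<and>
           Rum ** U - mat 1 = tensor bm mum \<and> Rvm ** V - mat 1 = tensor bm mvm \<and>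
           Rup ** U - Rvp ** V = tensor bp (mup - mvp) \<and>
           Rum ** U - Rvm ** V = tensor bm (mum - mvm)"
proof -
  obtain R e where R: "R \<in> SO3" "V = R ** U ** transpose R" and e: "e \<noteq> 0" "U *v e = e" "V *v e = e"
    using assms(5,10) by blast
  obtain P where P: "orthogonal_matrix P"
    and UP: "U = P ** diag3 l1 1 l3 ** transpose P" and VP: "V = P ** diag3 l3 1 l1 ** transpose P"
  proof (rule commuting_rotated_simultaneous_diag3[OF _ assms(6) _ _ _ assms(4) _ R(2) assms(3) e])
    show "transpose U = U" using assms(1) by (simp add: sym_posdef_def)
    show "orthogonal_matrix R" using R(1) by (simp add: SO3_def)
  qed (use assms(8,9) in auto)
  have "0 < 1 / sqrt (2::real)" by simp
  with assms(7) have "0 < l1" by linarith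
  define d where "d = (l3 - l1) / sqrt 2"
  have "rank_one_cluster U V (P *v vector [d, 0, k * d])" if "k^2 = 1" for k
    using rank_one_cluster_orthogonal_conj[OF P rank_one_cluster_diag3]
      twin_eigenvalue_relation[OF assms(7,11)] \<open>0 < l1\<close> assms(9) that
    by (simp add: UP VP d_def)
  from this[of 1] this[of "-1"] have "rank_one_cluster U V (P *v vector [d, 0, d])"
    "rank_one_cluster U V (P *v vector [d, 0, - d])" by simp_all
  moreover have "d \<noteq> 0" using assms(8,9) by (simp add: d_def)
  ultimately show ?thesis
    using orthogonal_shear_pair_independent[OF P] rank_one_cluster_difference by meson
qed

end
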